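(* Let $f$ be an operation of arity $k$ defined by a set $S$ of unconditional standard rules together with an unconditional default rule $r$ of the form $f\,x_1\ldots x_k = t$, where $x_1,\dots,x_k$ are pairwise distinct variables and $t$ is an expression. Let $\mathcal T$ be a minimal definitional tree of $S$, and let $R$ be the replacement of $r$ with respect to $\mathcal T$. Then for every ground $f$-rooted pattern $p$: $p$ is reduced at the root to some $q$ by the default rule $r$ if and only if $p$ is reduced at the root to $q$ by some rule of $R$.
   Context: Programs are constructor-based, typed rewrite systems: symbols are partitioned into operations and constructors, each data type has a finite set of constructors. An $f$-rooted pattern is a linear expression $f\,\overline{t_n}$ ($f$ an operation of arity $n$) where each $t_i$ consists only of variables and constructors; it is ground if it contains no variables. A rule $l = r$ reduces an expression $e$ at the root to $\sigma(r)$ if $e = \sigma(l)$ for a substitution $\sigma$. The default rule $r$ reduces $p$ at the root (to $\sigma(t)$, where $p=\sigma(f\,\overline{x_k})$) exactly when no rule of $S$ matches $p$. A partial definitional tree with $f$-rooted pattern $p$ is either a rule node $rule(p = r)$, an exempt node $exempt(p)$, or a branch node $branch(p, x, \mathcal{T}_1,\dots,\mathcal{T}_k)$ where $x$ is a variable of $p$ (the inductive variable), $\{c_1,\dots,c_k\}$ is the set of all constructors of the type of $x$, $\sigma_i = \{x \mapsto c_i\,\overline{y_{a_i}}\}$ with fresh variables, and each $\mathcal{T}_i$ is a partial definitional tree with pattern $\sigma_i(p)$. A definitional tree of a set of rules of $f$ is a finite partial definitional tree with pattern $f\,\overline{x_n}$ ($x_i$ pairwise distinct) containing all and only those rules (up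 to renaming). It is minimal if below every branch node there is some rule node. Replacement: if $N_1,\dots,N_m$ are the exempt nodes of $\mathcal T$, $f\,\overline{t^i_k}$ the pattern of $N_i$, and $\sigma_i = \{x_1\mapsto t^i_1,\dots,x_k\mapsto t^i_k\}$, the replacement of $r$ is the set of standard rules $\{\sigma_i(f\,\overline{x_k}) = \sigma_i(t) : 1\le i\le m\}$. *)

theory Defs
  imports Main
begin

text \<open>Symbols of type 'f (operations and constructors, distinguished by a predicate
  is_con), variables of type 'v, data types of type 'ty.\<close>

datatype ('f, 'v) expr = Var 'v | App 'f "('f, 'v) expr list"

fun vars :: "('f, 'v) expr \<Rightarrow> 'v set" where
  "vars (Var v) = {v}"
| "vars (App g es) = \<Union> (set (map vars es))"

fun varlist :: "('f, 'v) expr \<Rightarrow> 'v list" where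
  "varlist (Var v) = [v]"
| "varlist (App g es) = concat (map varlist es)"

definition linear :: "('f, 'v) expr \<Rightarrow> bool" where
  "linear e \<longleftrightarrow> distinct (varlist e)"

definition ground :: "('f, 'v) expr \<Rightarrow> bool" where
  "ground e \<longleftrightarrow> vars e = {}"

fun subst :: "('v \<Rightarrow> ('f, 'v) expr) \<Rightarrow> ('f, 'v) expr \<Rightarrow> ('f, 'v) expr" where
  "subst \<sigma> (Var v) = \<sigma> v"
| "subst \<sigma> (App g es) = App g (map (subst \<sigma>) es)"

fun cterm :: "('f \<Rightarrow> bool) \<Rightarrow> ('f, 'v) expr \<Rightarrow> bool" where
  "cterm is_con (Var v) = True"
| "cterm is_con (App c es) = (is_con c \<and> (\<forall>e\<in>set es. cterm is_con e))"

inductive wt :: "('f \<Rightarrow> 'ty list \<times> 'ty) \<Rightarrow> ('v \<Rightarrow> 'ty) \<Rightarrow> ('f, 'v) expr \<Rightarrow> 'ty \<Rightarrow> bool"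
  for sig vty where
  wt_Var: "wt sig vty (Var v) (vty v)"
| wt_App: "sig g = (Ts, T) \<Longrightarrow> list_all2 (wt sig vty) es Ts \<Longrightarrow> wt sig vty (App g es) T"

definition ctors :: "('f \<Rightarrow> bool) \<Rightarrow> ('f \<Rightarrow> 'ty list \<times> 'ty) \<Rightarrow> 'ty \<Rightarrow> 'f set" where
  "ctors is_con sig T = {c. is_con c \<and> snd (sig c) = T}"

definition rooted_pattern :: "('f \<Rightarrow> bool) \<Rightarrow> ('f \<Rightarrow> 'ty list \<times> 'ty) \<Rightarrow> 'f \<Rightarrow> ('f, 'v) expr \<Rightarrow> bool" where
  "rooted_pattern is_con sig f p \<longleftrightarrow>
     (\<exists>ts. p = App f ts \<and> \<not> is_con f \<and> length ts = length (fst (sig f))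
        \<and> (\<forall>t\<in>set ts. cterm is_con t) \<and> linear p)"

type_synonym ('f, 'v) rule = "('f, 'v) expr \<times> ('f, 'v) expr"

definition matches :: "('f, 'v) expr \<Rightarrow> ('f, 'v) expr \<Rightarrow> bool" where
  "matches l e \<longleftrightarrow> (\<exists>\<sigma>. e = subst \<sigma> l)"

definition root_reduces :: "('f, 'v) rule \<Rightarrow> ('f, 'v) expr \<Rightarrow> ('f, 'v) expr \<Rightarrow> bool" where
  "root_reduces \<rho> e q \<longleftrightarrow> (\<exists>\<sigma>. e = subst \<sigma> (fst \<rho>) \<and> q = subst \<sigma> (snd \<rho>))"

definition default_reduces ::
  "('f, 'v) rule set \<Rightarrow> 'f \<Rightarrow> 'v list \<Rightarrow> ('f, 'v) expr \<Rightarrow> ('f, 'v) expr \<Rightarrow> ('f, 'v) expr \<Rightarrow> bool" where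
  "default_reduces S f xs t e q \<longleftrightarrow>
     (\<forall>\<rho>\<in>S. \<not> matches (fst \<rho>) e) \<and> root_reduces (App f (map Var xs), t) e q"

definition variant :: "('v \<Rightarrow> 'ty) \<Rightarrow> ('f, 'v) rule \<Rightarrow> ('f, 'v) rule \<Rightarrow> bool" where
  "variant vty \<rho> \<rho>' \<longleftrightarrow> (\<exists>\<pi>. bij \<pi> \<and> (\<forall>v. vty (\<pi> v) = vty v)
       \<and> fst \<rho>' = subst (Var \<circ> \<pi>) (fst \<rho>) \<and> snd \<rho>' = subst (Var \<circ> \<pi>) (snd \<rho>))"

datatype ('f, 'v) pdt =
    RuleN "('f, 'v) expr" "('f, 'v) expr"
  | Exempt "('f, 'v) expr"
  | Branch "('f, 'v) expr" 'v "('f, 'v) pdt list"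

fun pattern_of :: "('f, 'v) pdt \<Rightarrow> ('f, 'v) expr" where
  "pattern_of (RuleN p r) = p"
| "pattern_of (Exempt p) = p"
| "pattern_of (Branch p x Ts) = p"

inductive is_pdt :: "('f \<Rightarrow> bool) \<Rightarrow> ('f \<Rightarrow> 'ty list \<times> 'ty) \<Rightarrow> ('v \<Rightarrow> 'ty)
    \<Rightarrow> ('f, 'v) expr \<Rightarrow> ('f, 'v) pdt \<Rightarrow> bool"
  for is_con sig vty where
  pdt_rule: "is_pdt is_con sig vty p (RuleN p r)"
| pdt_exempt: "is_pdt is_con sig vty p (Exempt p)"
| pdt_branch: "x \<in> vars p \<Longrightarrow> distinct cs \<Longrightarrow> set cs = ctors is_con sig (vty x)
    \<Longrightarrow> length cs = length Ts \<Longrightarrow> length yss = length Ts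
    \<Longrightarrow> (\<forall>i < length Ts. distinct (yss ! i) \<and> set (yss ! i) \<inter> vars p = {}
          \<and> map vty (yss ! i) = fst (sig (cs ! i))
          \<and> is_pdt is_con sig vty
               (subst (Var(x := App (cs ! i) (map Var (yss ! i)))) p) (Ts ! i))
    \<Longrightarrow> is_pdt is_con sig vty p (Branch p x Ts)"

fun rules_of :: "('f, 'v) pdt \<Rightarrow> ('f, 'v) rule set" where
  "rules_of (RuleN p r) = {(p, r)}"
| "rules_of (Exempt p) = {}"
| "rules_of (Branch p x Ts) = \<Union> (set (map rules_of Ts))"

fun exempt_patterns :: "('f, 'v) pdt \<Rightarrow> ('f, 'v) expr set" where
  "exempt_patterns (RuleN p r) = {}"
| "exempt_patterns (Exempt p) = {p}"
| "exempt_patterns (Branch p x Ts) = \<Union> (set (map exempt_patterns Ts))"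

fun subtrees :: "('f, 'v) pdt \<Rightarrow> ('f, 'v) pdt set" where
  "subtrees (RuleN p r) = {RuleN p r}"
| "subtrees (Exempt p) = {Exempt p}"
| "subtrees (Branch p x Ts) = insert (Branch p x Ts) (\<Union> (set (map subtrees Ts)))"

definition minimal_pdt :: "('f, 'v) pdt \<Rightarrow> bool" where
  "minimal_pdt T \<longleftrightarrow> (\<forall>B\<in>subtrees T. (\<exists>p x Ts. B = Branch p x Ts) \<longrightarrow> rules_of B \<noteq> {})"

definition def_tree :: "('f \<Rightarrow> bool) \<Rightarrow> ('f \<Rightarrow> 'ty list \<times> 'ty) \<Rightarrow> ('v \<Rightarrow> 'ty)
    \<Rightarrow> 'f \<Rightarrow> ('f, 'v) rule set \<Rightarrow> ('f, 'v) pdt \<Rightarrow> bool" where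
  "def_tree is_con sig vty f S T \<longleftrightarrow>
     (\<exists>zs. distinct zs \<and> length zs = length (fst (sig f))
        \<and> wt sig vty (App f (map Var zs)) (snd (sig f))
        \<and> is_pdt is_con sig vty (App f (map Var zs)) T)
     \<and> (\<forall>\<rho>\<in>S. \<exists>\<rho>'\<in>rules_of T. variant vty \<rho>' \<rho>)
     \<and> (\<forall>\<rho>'\<in>rules_of T. \<exists>\<rho>\<in>S. variant vty \<rho>' \<rho>)"

definition subst_of :: "'v list \<Rightarrow> ('f, 'v) expr list \<Rightarrow> 'v \<Rightarrow> ('f, 'v) expr" where
  "subst_of xs ts v = (case map_of (zip xs ts) v of Some e \<Rightarrow> e | None \<Rightarrow> Var v)"

definition replacement :: "'f \<Rightarrow> 'v list \<Rightarrow> ('f, 'v) expr \<Rightarrow> ('f, 'v) pdt \<Rightarrow> ('f, 'v) rule set" where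
  "replacement f xs t T =
     {(subst (subst_of xs ts) (App f (map Var xs)), subst (subst_of xs ts) t) | ts.
        App f ts \<in> exempt_patterns T}"

end

theory Submission imports Defs begin

text \<open>A ground well-typed f-rooted pattern is an instance of the root pattern f zs of the
  tree by constructor terms.  Descending along the inductive variables, it matches at least
  one leaf, because the children of a branch node cover all constructors of the variable's
  type, and it cannot match both a rule leaf and an exempt leaf, because siblings differ in
  the constructor at the inductive position.  So no rule of S matches it exactly when an
  exempt pattern does.  On an instance of an exempt pattern f ts the replacement rule
  f ts = t[xs := ts] takes the same step as the default rule f xs = t, since vars t \<subseteq> xs.\<close>

lemma subst_subst: "subst \<sigma> (subst \<tau> e) = subst (subst \<sigma> \<circ> \<tau>) e"
  by (induction e) auto

lemma subst_cong: "(\<And>v. v \<in> vars e \<Longrightarrow> \<sigma> v = \<tau> v) \<Longrightarrow> subst \<sigma> e = subst \<tau> e"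
  by (induction e) auto

lemma subst_eq_imp_agree: "subst \<sigma> e = subst \<tau> e \<Longrightarrow> v \<in> vars e \<Longrightarrow> \<sigma> v = \<tau> v"
  by (induction e) (auto simp: map_eq_conv)

lemma vars_substD: "v \<in> vars (subst \<tau> e) \<Longrightarrow> \<exists>u\<in>vars e. v \<in> vars (\<tau> u)"
  by (induction e) fastforce+

lemma subst_Var_ident [simp]: "subst Var e = e"
  by (induction e) (auto simp: map_idI)

lemma subst_ground: "ground e \<Longrightarrow> subst \<sigma> e = e"
  by (metis empty_iff ground_def subst_Var_ident subst_cong)

lemma subst_of_nth:
  "distinct xs \<Longrightarrow> length xs = length ts \<Longrightarrow> j < length xs \<Longrightarrow> subst_of xs ts (xs ! j) = ts ! j"
  by (simp add: subst_of_def map_of_zip_nth)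

lemma subst_of_notin: "v \<notin> set xs \<Longrightarrow> subst_of xs ts v = Var v"
  by (cases "map_of (zip xs ts) v") (auto simp: subst_of_def dest: map_of_SomeD set_zip_leftD)

lemma map_subst_of: "distinct xs \<Longrightarrow> length xs = length ts \<Longrightarrow> map (subst_of xs ts) xs = ts"
  by (rule nth_equalityI) (simp_all add: subst_of_nth)

lemma wt_subst_imp_wt_var:
  assumes "wt sig vty e \<tau>" "wt sig vty (subst \<sigma> e) \<tau>" "v \<in> vars e"
  shows "wt sig vty (\<sigma> v) (vty v)"
  using assms
proof (induction arbitrary: v rule: wt.induct)
  case (wt_Var u) then show ?case by simp
next
  case (wt_App g Ts T es)
  from wt_App.prems(1) have "list_all2 (wt sig vty) (map (subst \<sigma>) es) Ts"
    using wt_App.hyps(1) by (auto elim: wt.cases)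
  moreover from wt_App.prems(2) obtain j where "j < length es" "v \<in> vars (es ! j)"
    by (auto simp: in_set_conv_nth)
  ultimately show ?case using wt_App.IH by (auto simp: list_all2_conv_all_nth)
qed

definition ground_value :: "('f \<Rightarrow> bool) \<Rightarrow> ('f \<Rightarrow> 'ty list \<times> 'ty) \<Rightarrow> ('v \<Rightarrow> 'ty)
    \<Rightarrow> ('f, 'v) expr \<Rightarrow> 'ty \<Rightarrow> bool" where
  "ground_value is_con sig vty e \<tau> \<longleftrightarrow> ground e \<and> cterm is_con e \<and> wt sig vty e \<tau>"

lemma ground_valueE:
  assumes "ground_value is_con sig vty e \<tau>"
  obtains c args Us where "e = App c args" "c \<in> ctors is_con sig \<tau>" "sig c = (Us, \<tau>)"
    "list_all2 (ground_value is_con sig vty) args Us"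
proof -
  from assms obtain c args where e: "e = App c args"
    unfolding ground_value_def ground_def by (cases e) auto
  with assms obtain Us where "sig c = (Us, \<tau>)" "list_all2 (wt sig vty) args Us"
    by (auto simp: ground_value_def elim: wt.cases)
  moreover have "is_con c" "\<forall>a\<in>set args. ground a \<and> cterm is_con a"
    using assms e by (auto simp: ground_value_def ground_def)
  ultimately show ?thesis
    using that e by (auto simp: ctors_def ground_value_def list_all2_conv_all_nth)
qed

lemma is_pdt_leaf_instance:
  assumes "is_pdt is_con sig vty p T" "l \<in> fst ` rules_of T \<union> exempt_patterns T"
  shows "matches p l"
  using assms
proof (induction arbitrary: l rule: is_pdt.induct)
  case (pdt_rule p r) then show ?case by (auto simp: matches_def intro: exI[of _ Var])
next
  case (pdt_exempt p) then show ?case by (auto simp: matches_def intro: exI[of _ Var])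
next
  case (pdt_branch x p cs Ts yss)
  from pdt_branch.prems obtain T' where "T' \<in> set Ts" "l \<in> fst ` rules_of T' \<union> exempt_patterns T'"
    by force
  then obtain i where "i < length Ts" "l \<in> fst ` rules_of (Ts ! i) \<union> exempt_patterns (Ts ! i)"
    by (auto simp: in_set_conv_nth)
  with pdt_branch.IH have "matches (subst (Var(x := App (cs ! i) (map Var (yss ! i)))) p) l"
    by blast
  then show ?case by (auto simp: matches_def subst_subst)
qed

lemma is_pdt_rule_exempt_disjoint:
  assumes "is_pdt is_con sig vty p T" "(l, r) \<in> rules_of T" "l' \<in> exempt_patterns T"
  shows "subst \<sigma> l \<noteq> subst \<tau> l'"
  using assms
proof (induction arbitrary: l r l' \<sigma> \<tau> rule: is_pdt.induct)
  case (pdt_rule p r) then show ?case by simp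
next
  case (pdt_exempt p) then show ?case by simp
next
  case (pdt_branch x p cs Ts yss)
  define child where "child i = subst (Var(x := App (cs ! i) (map Var (yss ! i)))) p" for i
  from pdt_branch.prems obtain i j where
    i: "i < length Ts" "(l, r) \<in> rules_of (Ts ! i)" and
    j: "j < length Ts" "l' \<in> exempt_patterns (Ts ! j)"
    by (auto simp: in_set_conv_nth)
  show ?case
  proof (cases "i = j")
    case True
    then show ?thesis using pdt_branch.IH i j by blast
  next
    case False
    have "is_pdt is_con sig vty (child i) (Ts ! i)" "is_pdt is_con sig vty (child j) (Ts ! j)"
      using pdt_branch.IH i(1) j(1) unfolding child_def by blast+
    then have "matches (child i) l" "matches (child j) l'"
      using is_pdt_leaf_instance i(2) j(2) by fastforce+
    then obtain \<alpha> \<beta> where l: "l = subst \<alpha> (child i)" and l': "l' = subst \<beta> (child j)"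
      by (auto simp: matches_def)
    have "cs ! i \<noteq> cs ! j"
      using pdt_branch.hyps(2,4) i j False by (simp add: nth_eq_iff_index_eq)
    moreover have "subst \<sigma> (subst \<alpha> (child i)) = subst \<tau> (subst \<beta> (child j)) \<Longrightarrow> cs ! i = cs ! j"
      unfolding child_def subst_subst by (drule subst_eq_imp_agree[OF _ pdt_branch.hyps(1)]) simp
    ultimately show ?thesis using l l' by blast
  qed
qed

lemma refine_ground_instance:
  assumes x: "\<sigma> x = App c args"
    and args: "list_all2 (ground_value is_con sig vty) args (map vty ys)"
    and ys: "distinct ys" "set ys \<inter> vars p = {}"
    and vals: "\<And>v. v \<in> vars p \<Longrightarrow> ground_value is_con sig vty (\<sigma> v) (vty v)"
  defines "\<sigma>' \<equiv> subst \<sigma> \<circ> subst_of ys args"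
  shows "subst \<sigma>' (subst (Var(x := App c (map Var ys))) p) = subst \<sigma> p"
    and "\<And>v. v \<in> vars (subst (Var(x := App c (map Var ys))) p)
           \<Longrightarrow> ground_value is_con sig vty (\<sigma>' v) (vty v)"
proof -
  have len: "length ys = length args"
    using args by (simp add: list_all2_lengthD)
  have \<sigma>'_ys: "\<sigma>' (ys ! j) = args ! j" if "j < length ys" for j
  proof -
    have "ground (args ! j)"
      using args that len by (auto simp: list_all2_conv_all_nth ground_value_def)
    then show ?thesis
      using that len ys(1) by (simp add: \<sigma>'_def subst_of_nth subst_ground)
  qed
  have \<sigma>'_out: "\<sigma>' v = \<sigma> v" if "v \<notin> set ys" for v
    using that by (simp add: \<sigma>'_def subst_of_notin)
  have "map \<sigma>' ys = args"
    by (rule nth_equalityI) (simp_all add: len \<sigma>'_ys)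
  then have "subst \<sigma>' (App c (map Var ys)) = \<sigma> x"
    using x by (simp add: comp_def)
  then show "subst \<sigma>' (subst (Var(x := App c (map Var ys))) p) = subst \<sigma> p"
    unfolding subst_subst using ys(2) \<sigma>'_out by (intro subst_cong) auto
  fix v
  assume "v \<in> vars (subst (Var(x := App c (map Var ys))) p)"
  then obtain u where u: "u \<in> vars p" "v \<in> vars ((Var(x := App c (map Var ys))) u)"
    by (blast dest: vars_substD)
  show "ground_value is_con sig vty (\<sigma>' v) (vty v)"
  proof (cases "u = x")
    case True
    then obtain j where j: "j < length ys" "v = ys ! j"
      using u(2) by (auto simp: in_set_conv_nth)
    from args have "ground_value is_con sig vty (args ! j) (vty (ys ! j))"
      using j(1) len by (metis list_all2_nthD length_map nth_map)
    then show ?thesis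
      using j \<sigma>'_ys by simp
  next
    case False
    then have "v = u" "v \<notin> set ys" using u ys(2) by auto
    then show ?thesis using vals u(1) \<sigma>'_out by simp
  qed
qed

lemma is_pdt_leaves_cover:
  assumes "is_pdt is_con sig vty p T"
    and "\<And>v. v \<in> vars p \<Longrightarrow> ground_value is_con sig vty (\<sigma> v) (vty v)"
  shows "(\<exists>\<rho>\<in>rules_of T. matches (fst \<rho>) (subst \<sigma> p)) \<or> (\<exists>l\<in>exempt_patterns T. matches l (subst \<sigma> p))"
  using assms
proof (induction arbitrary: \<sigma> rule: is_pdt.induct)
  case (pdt_rule p r) then show ?case by (auto simp: matches_def)
next
  case (pdt_exempt p) then show ?case by (auto simp: matches_def)
next
  case (pdt_branch x p cs Ts yss)
  obtain c args Us where x: "\<sigma> x = App c args" and c: "c \<in> ctors is_con sig (vty x)"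
    and Us: "sig c = (Us, vty x)" and args: "list_all2 (ground_value is_con sig vty) args Us"
    using ground_valueE pdt_branch.prems pdt_branch.hyps(1) by metis
  obtain i where i: "i < length Ts" "c = cs ! i"
    using c pdt_branch.hyps(3,4) by (metis in_set_conv_nth)
  define ys where "ys = yss ! i"
  define child where "child = subst (Var(x := App c (map Var ys))) p"
  have ys: "distinct ys" "set ys \<inter> vars p = {}" "map vty ys = Us"
    using pdt_branch.IH i Us unfolding ys_def by simp_all
  have IH: "\<And>\<sigma>'. (\<And>v. v \<in> vars child \<Longrightarrow> ground_value is_con sig vty (\<sigma>' v) (vty v)) \<Longrightarrow>
      (\<exists>\<rho>\<in>rules_of (Ts ! i). matches (fst \<rho>) (subst \<sigma>' child))
      \<or> (\<exists>l\<in>exempt_patterns (Ts ! i). matches l (subst \<sigma>' child))"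
    using pdt_branch.IH i unfolding ys_def child_def by blast
  have args': "list_all2 (ground_value is_con sig vty) args (map vty ys)"
    using args ys(3) by simp
  define \<sigma>' where "\<sigma>' = subst \<sigma> \<circ> subst_of ys args"
  have "subst \<sigma>' child = subst \<sigma> p"
    and "\<And>v. v \<in> vars child \<Longrightarrow> ground_value is_con sig vty (\<sigma>' v) (vty v)"
    using refine_ground_instance[where \<sigma> = \<sigma> and x = x and p = p, OF x args' ys(1,2)] pdt_branch.prems
    unfolding child_def \<sigma>'_def by blast+
  then have "(\<exists>\<rho>\<in>rules_of (Ts ! i). matches (fst \<rho>) (subst \<sigma> p))
      \<or> (\<exists>l\<in>exempt_patterns (Ts ! i). matches l (subst \<sigma> p))"
    using IH by metis
  moreover have "Ts ! i \<in> set Ts" using i(1) by simp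
  ultimately show ?case by auto
qed

lemma is_pdt_exempt_iff_no_rule:
  assumes "is_pdt is_con sig vty p T"
    and "\<And>v. v \<in> vars p \<Longrightarrow> ground_value is_con sig vty (\<sigma> v) (vty v)"
  shows "(\<exists>l\<in>exempt_patterns T. matches l (subst \<sigma> p))
     \<longleftrightarrow> \<not> (\<exists>\<rho>\<in>rules_of T. matches (fst \<rho>) (subst \<sigma> p))"
  using is_pdt_leaves_cover[OF assms] is_pdt_rule_exempt_disjoint[OF assms(1)]
  by (metis matches_def prod.collapse)

lemma variant_matches_iff:
  assumes "variant vty \<rho>' \<rho>"
  shows "matches (fst \<rho>) e \<longleftrightarrow> matches (fst \<rho>') e"
proof -
  from assms obtain \<pi> where \<pi>: "bij \<pi>" "fst \<rho> = subst (Var \<circ> \<pi>) (fst \<rho>')"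
    unfolding variant_def by blast
  have "fst \<rho>' = subst (Var \<circ> inv \<pi>) (fst \<rho>)"
    using \<pi> by (simp add: subst_subst comp_def bij_is_inj)
  with \<pi>(2) show ?thesis
    unfolding matches_def by (metis subst_subst)
qed

lemma def_tree_matches_iff:
  assumes "def_tree is_con sig vty f S T"
  shows "(\<exists>\<rho>\<in>S. matches (fst \<rho>) e) \<longleftrightarrow> (\<exists>\<rho>\<in>rules_of T. matches (fst \<rho>) e)"
  using assms variant_matches_iff unfolding def_tree_def by metis

lemma root_reduces_instance:
  assumes "vars r \<subseteq> vars l"
  shows "root_reduces (subst \<tau> l, subst \<tau> r) e q \<longleftrightarrow> matches (subst \<tau> l) e \<and> root_reduces (l, r) e q"
proof
  assume "root_reduces (subst \<tau> l, subst \<tau> r) e q"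
  then show "matches (subst \<tau> l) e \<and> root_reduces (l, r) e q"
    unfolding root_reduces_def matches_def by (auto simp: subst_subst)
next
  assume "matches (subst \<tau> l) e \<and> root_reduces (l, r) e q"
  then obtain \<alpha> \<sigma> where e: "e = subst (subst \<alpha> \<circ> \<tau>) l" "e = subst \<sigma> l"
    and q: "q = subst \<sigma> r"
    unfolding root_reduces_def matches_def subst_subst by fastforce
  have "q = subst (subst \<alpha> \<circ> \<tau>) r"
    unfolding q using assms subst_eq_imp_agree[of \<sigma> l "subst \<alpha> \<circ> \<tau>"] e
    by (intro subst_cong) auto
  then show "root_reduces (subst \<tau> l, subst \<tau> r) e q"
    using e(1) unfolding root_reduces_def by (auto simp: subst_subst)
qed

lemma replacement_root_reduces:
  assumes "distinct xs" "vars t \<subseteq> set xs"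
    and exempt_shape: "\<And>l. l \<in> exempt_patterns T \<Longrightarrow> \<exists>ts. l = App f ts \<and> length ts = length xs"
  shows "(\<exists>\<rho>\<in>replacement f xs t T. root_reduces \<rho> e q)
     \<longleftrightarrow> (\<exists>l\<in>exempt_patterns T. matches l e) \<and> root_reduces (App f (map Var xs), t) e q"
proof -
  let ?l = "App f (map Var xs)"
  have vars_t: "vars t \<subseteq> vars ?l"
    using assms(2) by auto
  have inst: "subst (subst_of xs ts) ?l = App f ts" if "App f ts \<in> exempt_patterns T" for ts
    using exempt_shape[OF that] assms(1) by (auto simp: map_subst_of comp_def)
  have "(\<exists>\<rho>\<in>replacement f xs t T. root_reduces \<rho> e q)
      \<longleftrightarrow> (\<exists>ts. App f ts \<in> exempt_patterns T
             \<and> root_reduces (subst (subst_of xs ts) ?l, subst (subst_of xs ts) t) e q)"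
    unfolding replacement_def by blast
  also have "\<dots> \<longleftrightarrow> (\<exists>ts. App f ts \<in> exempt_patterns T \<and> matches (App f ts) e)
      \<and> root_reduces (?l, t) e q"
    using root_reduces_instance[OF vars_t] inst by auto
  also have "\<dots> \<longleftrightarrow> (\<exists>l\<in>exempt_patterns T. matches l e) \<and> root_reduces (?l, t) e q"
    using exempt_shape by blast
  finally show ?thesis .
qed

lemma rooted_ground_instance:
  assumes p: "rooted_pattern is_con sig f p" "ground p" "wt sig vty p \<tau>"
    and zs: "distinct zs" "length zs = length (fst (sig f))" "wt sig vty (App f (map Var zs)) \<tau>"
  obtains \<sigma> where "p = subst \<sigma> (App f (map Var zs))"
    and "\<And>v. v \<in> vars (App f (map Var zs)) \<Longrightarrow> ground_value is_con sig vty (\<sigma> v) (vty v)"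
proof -
  obtain ps where ps: "p = App f ps" "length ps = length zs" "\<forall>e\<in>set ps. cterm is_con e"
    using p(1) zs(2) unfolding rooted_pattern_def by auto
  have p_inst: "p = subst (subst_of zs ps) (App f (map Var zs))"
    using ps zs(1) by (simp add: comp_def map_subst_of)
  have "ground_value is_con sig vty (subst_of zs ps v) (vty v)"
    if v: "v \<in> vars (App f (map Var zs))" for v
  proof -
    obtain j where j: "j < length zs" "v = zs ! j"
      using v by (auto simp: in_set_conv_nth)
    then have "subst_of zs ps v = ps ! j" "ps ! j \<in> set ps"
      using ps(2) zs(1) by (simp_all add: subst_of_nth)
    moreover have "wt sig vty (subst_of zs ps v) (vty v)"
      by (rule wt_subst_imp_wt_var[OF zs(3) p(3)[unfolded p_inst] v])
    ultimately show ?thesis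
      using p(2) ps(1,3) by (auto simp: ground_value_def ground_def)
  qed
  with p_inst show ?thesis by (rule that)
qed

theorem mainTheorem5:
  fixes is_con :: "'f \<Rightarrow> bool"
    and sig :: "'f \<Rightarrow> 'ty list \<times> 'ty"
    and vty :: "'v \<Rightarrow> 'ty"
    and f :: 'f and k :: nat
    and S :: "('f, 'v) rule set"
    and xs :: "'v list" and t :: "('f, 'v) expr"
    and T :: "('f, 'v) pdt"
  assumes fin_ctors: "\<And>\<tau>. finite (ctors is_con sig \<tau>)"
    and f_op: "\<not> is_con f"
    and f_arity: "length (fst (sig f)) = k"
    and S_std: "\<And>l r. (l, r) \<in> S \<Longrightarrow> rooted_pattern is_con sig f l"
    and xs_dist: "distinct xs" and xs_len: "length xs = k"
    and t_vars: "vars t \<subseteq> set xs"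
    and T_def: "def_tree is_con sig vty f S T"
    and T_min: "minimal_pdt T"
  shows "\<forall>p q. rooted_pattern is_con sig f p \<and> ground p \<and> wt sig vty p (snd (sig f)) \<longrightarrow>
           (default_reduces S f xs t p q \<longleftrightarrow>
            (\<exists>\<rho>\<in>replacement f xs t T. root_reduces \<rho> p q))"
proof (intro allI impI)
  fix p q
  assume p: "rooted_pattern is_con sig f p \<and> ground p \<and> wt sig vty p (snd (sig f))"
  obtain zs where zs: "distinct zs" "length zs = length (fst (sig f))"
    "wt sig vty (App f (map Var zs)) (snd (sig f))" "is_pdt is_con sig vty (App f (map Var zs)) T"
    using T_def unfolding def_tree_def by blast
  obtain \<sigma> where \<sigma>: "p = subst \<sigma> (App f (map Var zs))"
    "\<And>v. v \<in> vars (App f (map Var zs)) \<Longrightarrow> ground_value is_con sig vty (\<sigma> v) (vty v)"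
    using rooted_ground_instance[OF _ _ _ zs(1-3)] p by blast
  have "(\<exists>l\<in>exempt_patterns T. matches l p) \<longleftrightarrow> \<not> (\<exists>\<rho>\<in>rules_of T. matches (fst \<rho>) p)"
    using is_pdt_exempt_iff_no_rule[OF zs(4) \<sigma>(2)] unfolding \<sigma>(1)[symmetric] .
  then have no_rule: "(\<forall>\<rho>\<in>S. \<not> matches (fst \<rho>) p) \<longleftrightarrow> (\<exists>l\<in>exempt_patterns T. matches l p)"
    using def_tree_matches_iff[OF T_def, of p] by blast
  have shape: "\<exists>ts. l = App f ts \<and> length ts = length xs" if l: "l \<in> exempt_patterns T" for l
  proof -
    obtain \<tau> where "l = subst \<tau> (App f (map Var zs))"
      using is_pdt_leaf_instance[OF zs(4)] l unfolding matches_def by blast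
    then show ?thesis using zs(2) f_arity xs_len by simp
  qed
  show "default_reduces S f xs t p q \<longleftrightarrow> (\<exists>\<rho>\<in>replacement f xs t T. root_reduces \<rho> p q)"
    using replacement_root_reduces[where e = p and q = q, OF xs_dist t_vars shape] no_rule
    unfolding default_reduces_def by blast
qed

end
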